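(* Let the polynomials $H_m(z)$ be defined by the generating function \[ \sum_{m=0}^{\infty}H_m(z)t^m=\frac{1}{1+t^2+zt^3}. \] Then for every $m$ the zeros of $H_m(z)$ are real, and the set $\bigcup_{m=0}^{\infty}\mathcal{Z}(H_m)$ is dense in $(-\infty,\infty)$.
   Context: $\mathcal{Z}(H_m)$ denotes the set of zeros of $H_m(z)$. Convention: the zeros of the constant zero polynomial are considered real. *)

theory Defs
  imports "HOL-Analysis.Analysis" "HOL-Computational_Algebra.Formal_Power_Series"
begin

definition H :: "nat \<Rightarrow> complex \<Rightarrow> complex" where
  "H m z = fps_nth (inverse (1 + fps_X ^ 2 + fps_const z * fps_X ^ 3)) m"

end

theory Submission
  imports Defs
begin

text \<open>The coefficients satisfy \<open>H (m+3) z = - H (m+1) z - z H m z\<close>, whose characteristic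
  polynomial is \<open>\<lambda>^3 + \<lambda> + z\<close>. For \<open>t \<in> (\<pi>/3, 2\<pi>/3)\<close>, \<open>\<rho> = 1/sqrt(1 - 4 cos^2 t)\<close>
  and \<open>z = 2 \<rho>^3 cos t\<close> its roots are \<open>\<rho> e^(\<plusminus>it)\<close> and \<open>-2 \<rho> cos t\<close>, which gives the closed
  form \<open>\<rho>^m H_trig m t = sin t (1 + 8 cos^2 t) H m z\<close>; moreover \<open>t \<mapsto> z\<close> is a
  homeomorphism of \<open>(\<pi>/3, 2\<pi>/3)\<close> onto the real line. At the nodes \<open>k\<pi>/(m+2)\<close> in that interval
  \<open>H_trig m\<close> has sign \<open>-(-1)^k\<close>, so it vanishes between consecutive nodes. This produces as
  many distinct real zeros as the degree of \<open>H m\<close> allows, leaving no room for non-real ones,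
  and as \<open>m\<close> grows the nodes, hence these zeros, become dense.\<close>

fun Hpoly :: "nat \<Rightarrow> complex poly" where
  "Hpoly 0 = 1"
| "Hpoly (Suc 0) = 0"
| "Hpoly (Suc (Suc 0)) = -1"
| "Hpoly (Suc (Suc (Suc n))) = - Hpoly (Suc n) - [:0, 1:] * Hpoly n"

fun Hreal :: "nat \<Rightarrow> real \<Rightarrow> real" where
  "Hreal 0 x = 1"
| "Hreal (Suc 0) x = 0"
| "Hreal (Suc (Suc 0)) x = -1"
| "Hreal (Suc (Suc (Suc n))) x = - Hreal (Suc n) x - x * Hreal n x"

lemma H_simps:
  "H 0 z = 1" "H (Suc 0) z = 0" "H (Suc (Suc 0)) z = -1"
  "H (Suc (Suc (Suc n))) z = - H (Suc n) z - z * H n z"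
proof -
  define Q :: "complex fps" where "Q = 1 + fps_X ^ 2 + fps_const z * fps_X ^ 3"
  define I where "I = inverse Q"
  have HI: "H m z = fps_nth I m" for m by (simp add: H_def I_def Q_def)
  have Q0: "fps_nth Q 0 = 1" by (simp add: Q_def)
  have IQ: "I * Q = 1" unfolding I_def by (rule inverse_mult_eq_1) (simp add: Q0)
  have "I * Q = I + fps_X ^ 2 * I + fps_const z * (fps_X ^ 3 * I)"
    by (simp add: Q_def algebra_simps)
  then have coeff_IQ: "fps_nth (I * Q) n = fps_nth I n + (if n < 2 then 0 else fps_nth I (n - 2))
      + z * (if n < 3 then 0 else fps_nth I (n - 3))" for n
    by (simp add: fps_X_power_mult_nth)
  have I0: "fps_nth I 0 = 1" unfolding I_def by (simp add: Q0)
  then show "H 0 z = 1" by (simp add: HI)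
  show "H (Suc 0) z = 0" using coeff_IQ[of 1] IQ HI by simp
  show "H (Suc (Suc 0)) z = -1"
    using coeff_IQ[of 2] IQ HI I0 by (simp add: eq_neg_iff_add_eq_0 numeral_2_eq_2)
  show "H (Suc (Suc (Suc n))) z = - H (Suc n) z - z * H n z"
    using coeff_IQ[of "n + 3"] IQ HI by (simp add: eq_neg_iff_add_eq_0 algebra_simps numeral_3_eq_3)
qed

lemma H_eq_poly_Hpoly: "H m z = poly (Hpoly m) z"
  by (induction m rule: Hpoly.induct) (simp_all add: H_simps)

lemma poly_Hpoly_of_real: "poly (Hpoly m) (of_real x) = of_real (Hreal m x)"
  by (induction m rule: Hpoly.induct) simp_all

lemma Hreal_recurrence_unique:
  assumes "u 0 = c" "u (Suc 0) = 0" "u (Suc (Suc 0)) = - c"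
    and "\<And>n. u (Suc (Suc (Suc n))) = - u (Suc n) - x * u n"
  shows "u n = c * Hreal n x"
  by (induction n rule: Hpoly.induct) (simp_all add: assms algebra_simps)

text \<open>\<open>deg_bound m\<close> is the number of \<open>k\<close> such that both \<open>k\<pi>/(m+2)\<close> and \<open>(k+1)\<pi>/(m+2)\<close>
  lie in \<open>(\<pi>/3, 2\<pi>/3)\<close>.\<close>

definition deg_bound :: "nat \<Rightarrow> nat" where "deg_bound m = 2 * m div 3 - (m + 2) div 3"

lemma deg_bound_Suc3: "deg_bound (Suc (Suc (Suc n))) = Suc (2 * n div 3) - (n + 2) div 3"
proof -
  have "2 * Suc (Suc (Suc n)) div 3 = Suc (Suc (2 * n div 3))"
    "(Suc (Suc (Suc n)) + 2) div 3 = Suc ((n + 2) div 3)"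
    by simp_all
  then show ?thesis by (simp add: deg_bound_def)
qed

lemma deg_bound_le_Suc3: "deg_bound (Suc n) \<le> deg_bound (Suc (Suc (Suc n)))"
proof -
  have "2 * Suc n div 3 \<le> Suc (2 * n div 3)"
    using div_le_mono[of "2 * Suc n" "2 * n + 3" 3] by simp
  moreover have "(n + 2) div 3 \<le> (Suc n + 2) div 3"
    by (simp add: div_le_mono)
  ultimately show ?thesis
    unfolding deg_bound_Suc3 deg_bound_def[of "Suc n"] by (meson diff_le_mono diff_le_mono2 order_trans)
qed

lemma Suc_deg_bound_le_Suc3: "n \<noteq> 1 \<Longrightarrow> deg_bound n + 1 \<le> deg_bound (Suc (Suc (Suc n)))"
proof -
  assume "n \<noteq> 1"
  then have "(n + 2) div 3 \<le> 2 * n div 3"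
    by (cases "n = 0") (simp_all add: div_le_mono)
  then show ?thesis
    unfolding deg_bound_Suc3 by (simp add: deg_bound_def Suc_diff_le)
qed

lemma degree_Hpoly_le: "degree (Hpoly m) \<le> deg_bound m"
proof (induction m rule: Hpoly.induct)
  case (4 n)
  have "degree ([:0, 1:] * Hpoly n) \<le> deg_bound (Suc (Suc (Suc n)))"
  proof (cases "n = 1")
    case False
    with 4(2) show ?thesis
      using degree_mult_le[of "[:0, 1::complex:]" "Hpoly n"] Suc_deg_bound_le_Suc3[of n] by simp
  qed simp
  with 4(1) deg_bound_le_Suc3[of n] show ?case
    by (simp add: degree_diff_le)
qed (simp_all add: deg_bound_def)

definition rho :: "real \<Rightarrow> real" where
  "rho t = 1 / sqrt (1 - 4 * cos t ^ 2)"

definition zeta :: "real \<Rightarrow> real" where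
  "zeta t = 2 * cos t * rho t ^ 3"

definition H_trig :: "nat \<Rightarrow> real \<Rightarrow> real" where
  "H_trig m t = 2 * sin ((real m + 1) * t) + sin ((real m + 3) * t) + (-2 * cos t) ^ (m + 2) * sin t"

lemma rho_pos: "4 * cos t ^ 2 < 1 \<Longrightarrow> 0 < rho t"
  unfolding rho_def by simp

lemma rho_sq: "4 * cos t ^ 2 < 1 \<Longrightarrow> rho t ^ 2 * (1 - 4 * cos t ^ 2) = 1"
  unfolding rho_def by (simp add: power_divide)

lemma sin_recurrence3:
  fixes x t :: real
  shows "sin ((x + 3) * t) = - (1 - 4 * cos t ^ 2) * sin ((x + 1) * t) - 2 * cos t * sin (x * t)"
proof -
  have step: "sin ((y + 2) * t) = 2 * sin ((y + 1) * t) * cos t - sin (y * t)" for y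
    using sin_times_cos[of "(y + 1) * t" t] by (simp add: algebra_simps)
  have "sin ((x + 3) * t) = 2 * sin ((x + 2) * t) * cos t - sin ((x + 1) * t)"
    using step[of "x + 1"] by (simp add: add.assoc)
  then show ?thesis
    by (simp only: step) (simp add: algebra_simps power2_eq_square)
qed

lemma H_trig_recurrence:
  "H_trig (Suc (Suc (Suc n))) t = - (1 - 4 * cos t ^ 2) * H_trig (Suc n) t - 2 * cos t * H_trig n t"
  using sin_recurrence3[of "real n + 1" t] sin_recurrence3[of "real n + 3" t]
  by (simp add: H_trig_def algebra_simps power2_eq_square)

lemma H_trig_initial:
  "H_trig 0 t = sin t * (1 + 8 * cos t ^ 2)"
  "H_trig 1 t = 0"
  "H_trig 2 t = - (1 - 4 * cos t ^ 2) * (sin t * (1 + 8 * cos t ^ 2))"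
proof -
  have s2: "sin (2 * t) = 2 * sin t * cos t" by (rule sin_double)
  have s3: "sin (3 * t) = - (1 - 4 * cos t ^ 2) * sin t"
    using sin_recurrence3[of 0 t] by simp
  have s4: "sin (4 * t) = - (1 - 4 * cos t ^ 2) * sin (2 * t) - 2 * cos t * sin t"
    using sin_recurrence3[of 1 t] by simp
  have s5: "sin (5 * t) = - (1 - 4 * cos t ^ 2) * sin (3 * t) - 2 * cos t * sin (2 * t)"
    using sin_recurrence3[of 2 t] by simp
  have "H_trig 0 t = 2 * sin t + sin (3 * t) + 4 * cos t ^ 2 * sin t"
    by (simp add: H_trig_def power2_eq_square)
  then show "H_trig 0 t = sin t * (1 + 8 * cos t ^ 2)"
    by (simp only: s3) (simp add: algebra_simps)
  have "H_trig 1 t = 2 * sin (2 * t) + sin (4 * t) - 8 * cos t ^ 3 * sin t"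
    by (simp add: H_trig_def power3_eq_cube)
  then show "H_trig 1 t = 0"
    by (simp only: s4 s2) (simp add: algebra_simps power2_eq_square power3_eq_cube)
  have "H_trig 2 t = 2 * sin (3 * t) + sin (5 * t) + 16 * cos t ^ 4 * sin t"
    by (simp add: H_trig_def power_mult_distrib)
  then show "H_trig 2 t = - (1 - 4 * cos t ^ 2) * (sin t * (1 + 8 * cos t ^ 2))"
    by (simp only: s5 s3 s2) (simp add: algebra_simps power2_eq_square power4_eq_xxxx)
qed

lemma Hreal_zeta:
  assumes "4 * cos t ^ 2 < 1"
  shows "rho t ^ m * H_trig m t = sin t * (1 + 8 * cos t ^ 2) * Hreal m (zeta t)"
proof (rule Hreal_recurrence_unique)
  have sq: "rho t ^ 2 * (1 - 4 * cos t ^ 2) = 1" by (rule rho_sq[OF assms])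
  show "rho t ^ 0 * H_trig 0 t = sin t * (1 + 8 * cos t ^ 2)"
    by (simp add: H_trig_initial)
  show "rho t ^ Suc 0 * H_trig (Suc 0) t = 0"
    using H_trig_initial(2) by simp
  show "rho t ^ Suc (Suc 0) * H_trig (Suc (Suc 0)) t = - (sin t * (1 + 8 * cos t ^ 2))"
  proof -
    have "rho t ^ 2 * H_trig 2 t = - (rho t ^ 2 * (1 - 4 * cos t ^ 2)) * (sin t * (1 + 8 * cos t ^ 2))"
      by (simp add: H_trig_initial algebra_simps)
    then show ?thesis
      unfolding sq by (simp add: numeral_2_eq_2)
  qed
  fix n
  have "rho t ^ Suc (Suc (Suc n)) * (1 - 4 * cos t ^ 2) = rho t ^ Suc n * (rho t ^ 2 * (1 - 4 * cos t ^ 2))"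
    by (simp add: algebra_simps power2_eq_square)
  then have shift: "rho t ^ Suc (Suc (Suc n)) * (1 - 4 * cos t ^ 2) = rho t ^ Suc n"
    unfolding sq by simp
  have "rho t ^ Suc (Suc (Suc n)) * H_trig (Suc (Suc (Suc n))) t
      = - (rho t ^ Suc (Suc (Suc n)) * (1 - 4 * cos t ^ 2)) * H_trig (Suc n) t
        - 2 * cos t * rho t ^ Suc (Suc (Suc n)) * H_trig n t"
    unfolding H_trig_recurrence by (simp add: algebra_simps)
  then show "rho t ^ Suc (Suc (Suc n)) * H_trig (Suc (Suc (Suc n))) t
      = - (rho t ^ Suc n * H_trig (Suc n) t) - zeta t * (rho t ^ n * H_trig n t)"
    unfolding shift zeta_def by (simp add: algebra_simps power3_eq_cube)
qed

definition mid_third :: "real set" where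
  "mid_third = {pi / 3<..<2 * pi / 3}"

lemma mid_third_cos_sin:
  assumes "t \<in> mid_third"
  shows "\<bar>cos t\<bar> < 1 / 2" "4 * cos t ^ 2 < 1" "0 < sin t"
proof -
  have t: "pi / 3 < t" "t < 2 * pi / 3" using assms by (auto simp: mid_third_def)
  have "cos t < cos (pi / 3)" "cos (2 * pi / 3) < cos t"
    using t pi_gt_zero by (auto intro!: cos_monotone_0_pi)
  then show abs_cos: "\<bar>cos t\<bar> < 1 / 2" by (simp add: cos_60 cos_120)
  have "\<bar>cos t\<bar> ^ 2 < (1 / 2) ^ 2"
    using abs_cos by (intro power_strict_mono) auto
  then show "4 * cos t ^ 2 < 1" by (simp add: power_divide)
  show "0 < sin t" using t pi_gt_zero by (intro sin_gt_zero) auto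
qed

lemma Hreal_zeta_eq_0_iff:
  assumes "t \<in> mid_third"
  shows "Hreal m (zeta t) = 0 \<longleftrightarrow> H_trig m t = 0"
proof -
  have c: "4 * cos t ^ 2 < 1" and s: "0 < sin t" using mid_third_cos_sin[OF assms] by auto
  have "0 < sin t * (1 + 8 * cos t ^ 2)" using s by (simp add: add_pos_nonneg)
  with Hreal_zeta[OF c, of m] rho_pos[OF c] show ?thesis by auto
qed

definition node :: "nat \<Rightarrow> nat \<Rightarrow> real" where
  "node m k = real k * pi / (real m + 2)"

lemma node_strict_mono: "strict_mono (node m)"
  by (rule strict_monoI) (simp add: node_def divide_strict_right_mono)

lemma node_in_mid_third:
  assumes "m + 2 < 3 * k" "3 * k < 2 * (m + 2)"
  shows "node m k \<in> mid_third"
proof -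
  have "real (m + 2) < real (3 * k)" "real (3 * k) < real (2 * (m + 2))"
    using assms by (simp_all only: of_nat_less_iff)
  then have "pi * (real m + 2) < pi * (3 * real k)" "pi * (3 * real k) < pi * (2 * (real m + 2))"
    by simp_all
  then show ?thesis
    by (simp add: mid_third_def node_def field_simps)
qed

lemma H_trig_node: "H_trig m (node m k) = sin (node m k) * ((-2 * cos (node m k)) ^ (m + 2) - (-1) ^ k)"
proof -
  have "(real m + 1) * node m k = real k * pi - node m k" "(real m + 3) * node m k = real k * pi + node m k"
    by (simp_all add: node_def field_simps)
  then show ?thesis
    unfolding H_trig_def by (simp only:) (simp add: sin_diff sin_add algebra_simps)
qed

lemma H_trig_node_sign:
  assumes "node m k \<in> mid_third"
  shows "(-1) ^ k * H_trig m (node m k) < 0"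
proof -
  define t where "t = node m k"
  have c: "\<bar>cos t\<bar> < 1 / 2" and s: "0 < sin t" using mid_third_cos_sin assms by (auto simp: t_def)
  have "\<bar>-2 * cos t\<bar> ^ (m + 2) < 1"
    using c by (subst power_less_one_iff) (auto simp: abs_mult)
  then have "\<bar>(-2 * cos t) ^ (m + 2)\<bar> < 1"
    by (simp only: power_abs)
  then have "(-1) ^ k * (-2 * cos t) ^ (m + 2) < 1"
    by (cases "even k") (auto simp: abs_less_iff)
  moreover have "(-1) ^ k * H_trig m t = sin t * ((-1) ^ k * (-2 * cos t) ^ (m + 2) - 1)"
    by (simp add: t_def H_trig_node algebra_simps)
  ultimately show ?thesis using s by (simp add: t_def mult_pos_neg)
qed

lemma H_trig_zero_between_nodes:
  assumes "node m k \<in> mid_third" "node m (Suc k) \<in> mid_third"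
  shows "\<exists>t. node m k < t \<and> t < node m (Suc k) \<and> H_trig m t = 0"
proof -
  have sign_k: "(-1) ^ k * H_trig m (node m k) < 0"
    and sign_Suc_k: "- ((-1) ^ k * H_trig m (node m (Suc k))) < 0"
    using H_trig_node_sign[OF assms(1)] H_trig_node_sign[OF assms(2)] by simp_all
  have lt: "node m k < node m (Suc k)" by (simp add: node_strict_mono strict_monoD)
  have cont: "continuous_on S (\<lambda>t. (-1) ^ k * H_trig m t)" for S
    unfolding H_trig_def by (intro continuous_intros)
  obtain t where t: "node m k \<le> t" "t \<le> node m (Suc k)" "(-1) ^ k * H_trig m t = 0"
    using IVT'[of "\<lambda>t. (-1) ^ k * H_trig m t" "node m k" 0 "node m (Suc k)"] sign_k sign_Suc_k lt cont
    by auto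
  moreover have "t \<noteq> node m k" "t \<noteq> node m (Suc k)" using t sign_k sign_Suc_k by auto
  ultimately show ?thesis by (intro exI[of _ t]) auto
qed

definition alpha :: "real \<Rightarrow> real" where
  "alpha t = -2 * cos t * rho t"

lemma zeta_eq_alpha:
  assumes "4 * cos t ^ 2 < 1"
  shows "zeta t = - (alpha t + alpha t ^ 3)"
proof -
  have "- (alpha t + alpha t ^ 3) = 2 * cos t * rho t * (rho t ^ 2 * (1 - 4 * cos t ^ 2)) + 8 * cos t ^ 3 * rho t ^ 3"
    unfolding alpha_def rho_sq[OF assms] by (simp add: algebra_simps power3_eq_cube)
  also have "\<dots> = zeta t"
    by (simp add: zeta_def algebra_simps power2_eq_square power3_eq_cube)
  finally show ?thesis by simp
qed

lemma cos_eq_alpha: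
  assumes "4 * cos t ^ 2 < 1"
  shows "cos t = - alpha t / (2 * sqrt (1 + alpha t ^ 2))"
proof -
  have "1 + alpha t ^ 2 = rho t ^ 2 * (1 - 4 * cos t ^ 2) + 4 * cos t ^ 2 * rho t ^ 2"
    unfolding rho_sq[OF assms] by (simp add: alpha_def power_mult_distrib)
  then have "sqrt (1 + alpha t ^ 2) = rho t"
    using rho_pos[OF assms] by (simp add: algebra_simps)
  then show ?thesis
    using rho_pos[OF assms] by (simp add: alpha_def)
qed

lemma strict_mono_cubic: "strict_mono (\<lambda>a::real. a + a ^ 3)"
  by (rule strict_monoI) (simp add: add_less_le_mono power_mono_odd)

lemma surj_cubic: "surj (\<lambda>a::real. a + a ^ 3)"
proof -
  have "\<exists>a. a + a ^ 3 = x" for x :: real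
  proof -
    define b where "b = \<bar>x\<bar> + 1"
    have "0 \<le> b ^ 3" "\<bar>x\<bar> < b" by (simp_all add: b_def)
    moreover have "(- b) ^ 3 = - (b ^ 3)" by simp
    ultimately have "- b + (- b) ^ 3 \<le> x" "x \<le> b + b ^ 3" "- b \<le> b"
      unfolding abs_less_iff by linarith+
    moreover have "continuous_on {- b..b} (\<lambda>a. a + a ^ 3)"
      by (intro continuous_intros)
    ultimately show ?thesis
      using IVT'[of "\<lambda>a. a + a ^ 3" "- b" x b] by auto
  qed
  then show ?thesis by (metis surj_def)
qed

lemma inj_on_zeta: "inj_on zeta mid_third"
proof (rule inj_onI)
  fix s t assume s: "s \<in> mid_third" and t: "t \<in> mid_third" and "zeta s = zeta t"
  have cs: "4 * cos s ^ 2 < 1" and ct: "4 * cos t ^ 2 < 1"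
    using mid_third_cos_sin s t by auto
  have "alpha s + alpha s ^ 3 = alpha t + alpha t ^ 3"
    using \<open>zeta s = zeta t\<close> by (simp add: zeta_eq_alpha[OF cs] zeta_eq_alpha[OF ct])
  then have "alpha s = alpha t"
    using strict_mono_cubic by (metis strict_mono_eq)
  then have "cos s = cos t"
    by (simp add: cos_eq_alpha[OF cs] cos_eq_alpha[OF ct])
  moreover have "0 \<le> s" "s \<le> pi" "0 \<le> t" "t \<le> pi"
    using s t pi_gt_zero unfolding mid_third_def greaterThanLessThan_iff by linarith+
  ultimately show "s = t" by (simp add: cos_inj_pi)
qed

lemma zeta_mid_third: "zeta ` mid_third = UNIV"
proof -
  have "x \<in> zeta ` mid_third" for x
  proof -
    obtain a where a: "a + a ^ 3 = - x"
      using surjD[OF surj_cubic, of "- x"] by auto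
    define r where "r = sqrt (1 + a ^ 2)"
    have r: "0 < r" "r ^ 2 = 1 + a ^ 2" by (simp_all add: r_def add_pos_nonneg)
    define c where "c = - a / (2 * r)"
    have "\<bar>a\<bar> < r"
      unfolding r_def by (metis real_sqrt_abs real_sqrt_less_mono less_add_one add.commute)
    then have c_half: "\<bar>c\<bar> < 1 / 2" using r by (simp add: c_def abs_divide abs_mult field_simps)
    define t where "t = arccos c"
    have cos_t: "cos t = c" using c_half by (simp add: t_def cos_arccos)
    have "- (1 / 2) < c" "c < 1 / 2" using c_half by linarith+
    then have "arccos (1 / 2) < t" "t < arccos (- (1 / 2))"
      unfolding t_def by (intro arccos_less_arccos; simp)+
    then have t: "t \<in> mid_third" by (simp add: mid_third_def)
    have "4 * cos t ^ 2 = a ^ 2 / r ^ 2"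
      by (simp add: cos_t c_def power_divide power_mult_distrib)
    moreover have "1 - a ^ 2 / r ^ 2 = (r ^ 2 - a ^ 2) / r ^ 2"
      using \<open>0 < r\<close> by (simp add: diff_divide_distrib)
    moreover have "(r ^ 2 - a ^ 2) / r ^ 2 = 1 / r ^ 2"
      using \<open>r ^ 2 = 1 + a ^ 2\<close> by simp
    ultimately have "1 - 4 * cos t ^ 2 = 1 / r ^ 2"
      by simp
    then have "rho t = r" using r by (simp add: rho_def real_sqrt_divide r_def)
    then have "alpha t = a" using r by (simp add: alpha_def cos_t c_def)
    then have "x = zeta t"
      using zeta_eq_alpha mid_third_cos_sin[OF t] a by simp
    then show ?thesis using t by (rule image_eqI)
  qed
  then show ?thesis by blast
qed

lemma continuous_on_zeta: "continuous_on mid_third zeta"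
proof -
  have "continuous_on mid_third (\<lambda>t. 2 * cos t * (1 / sqrt (1 - 4 * cos t ^ 2)) ^ 3)"
    by (intro continuous_intros) (force dest: mid_third_cos_sin(2))+
  then show ?thesis by (simp add: zeta_def[abs_def] rho_def[abs_def])
qed

lemma H_of_real: "H m (of_real x) = of_real (Hreal m x)"
  by (simp add: H_eq_poly_Hpoly poly_Hpoly_of_real)

lemma Hreal_many_zeros: "\<exists>S. finite S \<and> card S = deg_bound m \<and> (\<forall>x \<in> S. Hreal m x = 0)"
proof -
  define K where "K = {(m + 2) div 3 + 1..<2 * m div 3 + 1}"
  have nodes: "node m k \<in> mid_third \<and> node m (Suc k) \<in> mid_third" if "k \<in> K" for k
  proof -
    have "3 * ((m + 2) div 3) + 3 > m + 2" "3 * (2 * m div 3) \<le> 2 * m" by linarith+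
    then show ?thesis using that by (intro conjI node_in_mid_third) (auto simp: K_def)
  qed
  obtain \<theta> where \<theta>: "\<And>k. k \<in> K \<Longrightarrow> node m k < \<theta> k \<and> \<theta> k < node m (Suc k) \<and> H_trig m (\<theta> k) = 0"
    using H_trig_zero_between_nodes nodes by metis
  have \<theta>_mid_third: "\<theta> k \<in> mid_third" if "k \<in> K" for k
    using \<theta>[OF that] nodes[OF that] unfolding mid_third_def greaterThanLessThan_iff by linarith
  have "strict_mono_on K \<theta>"
  proof (rule strict_mono_onI)
    fix k l assume "k \<in> K" "l \<in> K" "k < l"
    then have "node m (Suc k) \<le> node m l"
      by (simp add: node_strict_mono strict_mono_less_eq)
    with \<theta>[OF \<open>k \<in> K\<close>] \<theta>[OF \<open>l \<in> K\<close>] show "\<theta> k < \<theta> l" by linarith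
  qed
  then have "inj_on (zeta \<circ> \<theta>) K"
    using \<theta>_mid_third
    by (intro comp_inj_on strict_mono_on_imp_inj_on inj_on_subset[OF inj_on_zeta]) auto
  then have "card ((zeta \<circ> \<theta>) ` K) = card K"
    by (rule card_image)
  also have "\<dots> = deg_bound m"
    by (simp add: K_def deg_bound_def)
  finally have "card ((zeta \<circ> \<theta>) ` K) = deg_bound m" .
  moreover have "Hreal m x = 0" if "x \<in> (zeta \<circ> \<theta>) ` K" for x
    using that \<theta> \<theta>_mid_third Hreal_zeta_eq_0_iff by auto
  ultimately show ?thesis
    by (intro exI[of _ "(zeta \<circ> \<theta>) ` K"]) (auto simp: K_def)
qed

lemma H_zeros_real:
  assumes "\<exists>z. H m z \<noteq> 0" and "H m z = 0"
  shows "z \<in> \<real>"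
proof (rule ccontr)
  assume "z \<notin> \<real>"
  have p: "Hpoly m \<noteq> 0" using assms(1) by (auto simp: H_eq_poly_Hpoly)
  obtain S where S: "finite S" "card S = deg_bound m" "\<forall>x \<in> S. Hreal m x = 0"
    using Hreal_many_zeros by blast
  have "insert z (of_real ` S) \<subseteq> {x. poly (Hpoly m) x = 0}"
    using assms(2) S(3) by (auto simp: H_eq_poly_Hpoly poly_Hpoly_of_real)
  then have "card (insert z (of_real ` S)) \<le> degree (Hpoly m)"
    using card_mono[OF poly_roots_finite[OF p]] card_poly_roots_bound[OF p] by (meson order_trans)
  moreover have "z \<notin> of_real ` S" using \<open>z \<notin> \<real>\<close> by (auto simp: Reals_def)
  then have "card (insert z (of_real ` S)) = Suc (deg_bound m)"
    using S(1,2) by (simp add: card_image inj_on_def)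
  ultimately show False using degree_Hpoly_le[of m] by simp
qed

lemma nodes_near:
  assumes "t0 \<in> mid_third" "0 < d"
  shows "\<exists>m k. t0 < node m k \<and> node m (Suc k) < t0 + d
    \<and> node m k \<in> mid_third \<and> node m (Suc k) \<in> mid_third"
proof -
  define d' where "d' = min d (2 * pi / 3 - t0)"
  have "0 < d'" using assms by (simp add: d'_def mid_third_def)
  obtain m :: nat where "2 * pi / d' < real m" using reals_Archimedean2 by blast
  then have "2 * pi / d' < real m + 2" by linarith
  then have step: "2 * (pi / (real m + 2)) < d'"
    using \<open>0 < d'\<close> by (simp add: field_simps)
  define \<delta> where "\<delta> = pi / (real m + 2)"
  have "0 < \<delta>" by (simp add: \<delta>_def)
  define y where "y = t0 / \<delta>"
  have "0 \<le> y" using assms(1) \<open>0 < \<delta>\<close> by (simp add: y_def mid_third_def)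
  define k where "k = nat \<lfloor>y\<rfloor> + 1"
  have "y < real k" "real k \<le> y + 1" using \<open>0 \<le> y\<close> by (simp_all add: k_def) linarith+
  then have "y * \<delta> < real k * \<delta>" "real k * \<delta> \<le> (y + 1) * \<delta>"
    using \<open>0 < \<delta>\<close> by (simp_all add: mult_right_mono)
  moreover have "node m k = real k * \<delta>" "t0 = y * \<delta>"
    using \<open>0 < \<delta>\<close> by (simp_all add: node_def \<delta>_def y_def)
  ultimately have "t0 < node m k" "node m k \<le> t0 + \<delta>"
    by (simp_all add: algebra_simps)
  moreover have "node m (Suc k) = node m k + \<delta>"
    by (simp add: node_def \<delta>_def distrib_right add_divide_distrib)
  ultimately have "t0 < node m k" "node m k < node m (Suc k)" "node m (Suc k) < t0 + d'"
    using step \<open>0 < \<delta>\<close> by (simp_all add: \<delta>_def)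
  moreover have "d' \<le> d" "d' \<le> 2 * pi / 3 - t0" by (simp_all add: d'_def)
  ultimately show ?thesis
    using assms(1) unfolding mid_third_def greaterThanLessThan_iff
    by (intro exI[of _ m] exI[of _ k] conjI) linarith+
qed

lemma real_zero_near:
  assumes "0 < e"
  shows "\<exists>m y. (\<exists>z. H m z \<noteq> 0) \<and> H m (of_real y) = 0 \<and> dist y x < e"
proof -
  obtain t0 where t0: "t0 \<in> mid_third" "zeta t0 = x"
    using zeta_mid_third by (metis UNIV_I imageE)
  have "isCont zeta t0"
    using continuous_on_zeta t0(1) by (simp add: continuous_on_eq_continuous_at mid_third_def)
  then obtain d where "0 < d" and d: "\<And>t. dist t t0 < d \<Longrightarrow> dist (zeta t) x < e"
    using assms t0(2) unfolding continuous_at_eps_delta by metis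
  obtain m k where mk: "t0 < node m k" "node m (Suc k) < t0 + d"
    "node m k \<in> mid_third" "node m (Suc k) \<in> mid_third"
    using nodes_near[OF t0(1) \<open>0 < d\<close>] by blast
  obtain t where t: "node m k < t" "t < node m (Suc k)" "H_trig m t = 0"
    using H_trig_zero_between_nodes[OF mk(3,4)] by blast
  have "t \<in> mid_third"
    using t mk unfolding mid_third_def greaterThanLessThan_iff by linarith
  then have "H m (of_real (zeta t)) = 0"
    using t(3) by (simp add: H_of_real Hreal_zeta_eq_0_iff)
  moreover have "H m (of_real (zeta (node m k))) \<noteq> 0"
    using H_trig_node_sign[OF mk(3)] mk(3) by (auto simp: H_of_real Hreal_zeta_eq_0_iff)
  moreover have "dist (zeta t) x < e"
    using t mk by (intro d) (simp add: dist_real_def)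
  ultimately show ?thesis by blast
qed

theorem theorem3p1:
  shows "(\<forall>m. (\<exists>z. H m z \<noteq> 0) \<longrightarrow> (\<forall>z. H m z = 0 \<longrightarrow> z \<in> \<real>))
       \<and> closure (\<Union>m \<in> {m. \<exists>z. H m z \<noteq> 0}. {x::real. H m (complex_of_real x) = 0}) = UNIV"
proof
  show "\<forall>m. (\<exists>z. H m z \<noteq> 0) \<longrightarrow> (\<forall>z. H m z = 0 \<longrightarrow> z \<in> \<real>)"
    using H_zeros_real by blast
  have "x \<in> closure (\<Union>m \<in> {m. \<exists>z. H m z \<noteq> 0}. {x::real. H m (complex_of_real x) = 0})" for x
    unfolding closure_approachable using real_zero_near by fastforce
  then show "closure (\<Union>m \<in> {m. \<exists>z. H m z \<noteq> 0}. {x::real. H m (complex_of_real x) = 0}) = UNIV"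
    by blast
qed

end
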